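(* Let $\rho>1$. Then: (i) $0<\kappa^c_\rho(1)<1$; more precisely, if $1<\rho\le2$ then $\kappa^c_\rho(1)=\frac{2\sqrt\rho}{1+\rho}$, while if $\rho\ge2$ then $\kappa^c_\rho(1)=\frac{\sqrt{4+\rho^2}}{1+\rho}$. (ii) $0<\kappa^c_\rho<1$. (iii) There exists $\rho_0>2$ such that if $\rho\le\rho_0$ then $\kappa^c_\rho=\kappa^c_\rho(1)$. Consequently, if $1<\rho\le2$ then $\kappa^c_\rho=\frac{2\sqrt\rho}{1+\rho}$, while if $2\le\rho\le\rho_0$ then $\kappa^c_\rho=\frac{\sqrt{4+\rho^2}}{1+\rho}$.
   Context: Fix $\rho>1$ and an integer $k\ge1$. Set $r_1=r_{k+1}=1+\rho$ and $r_i=2$ for $2\le i\le k$. For $(a_i)_{2\le i\le k+1}\in[0,1)^k$ define $d_1=1+\rho$ and, for $2\le i\le k+1$, $d_i>0$ by $d_i^2=d_{i-1}^2+2r_ia_id_{i-1}+r_i^2$; write $\mathcal D(a_2,\dots,a_{k+1})=d_{k+1}$. Set $$\kappa^c_\rho(k)=\inf_{0\le a_2,\dots,a_{k+1}<1}\max\left(\left(\frac{4\rho}{(1+\rho)^2\sqrt{\prod_{2\le i\le k+1}(1-a_i^2)}}\right)^{\frac1{k+1}},\ \frac{2\rho}{\mathcal D(a_2,\dots,a_{k+1})}\right),$$ and $\kappa^c_\rho=\inf_{k\ge1}\kappa^c_\rho(k)$. *)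

theory Defs
  imports Complex_Main
begin

definition rad :: "real \<Rightarrow> nat \<Rightarrow> nat \<Rightarrow> real" where
  "rad \<rho> k i = (if i = 1 \<or> i = k + 1 then 1 + \<rho> else 2)"

(* dd \<rho> k a j = d_{j+1}; d_1 = 1 + rho,
   d_i = positive root of d_i^2 = d_{i-1}^2 + 2 r_i a_i d_{i-1} + r_i^2 *)
primrec dd :: "real \<Rightarrow> nat \<Rightarrow> (nat \<Rightarrow> real) \<Rightarrow> nat \<Rightarrow> real" where
  "dd \<rho> k a 0 = 1 + \<rho>"
| "dd \<rho> k a (Suc j) =
     sqrt ((dd \<rho> k a j)\<^sup>2 + 2 * rad \<rho> k (j + 2) * a (j + 2) * dd \<rho> k a j
           + (rad \<rho> k (j + 2))\<^sup>2)"

definition Dfun :: "real \<Rightarrow> nat \<Rightarrow> (nat \<Rightarrow> real) \<Rightarrow> real" where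
  "Dfun \<rho> k a = dd \<rho> k a k"

definition admissible :: "nat \<Rightarrow> (nat \<Rightarrow> real) set" where
  "admissible k = {a. \<forall>i\<in>{2..k+1}. 0 \<le> a i \<and> a i < 1}"

definition kappa_ck :: "real \<Rightarrow> nat \<Rightarrow> real" where
  "kappa_ck \<rho> k = (INF a \<in> admissible k.
      max ((4 * \<rho> / ((1 + \<rho>)\<^sup>2 * sqrt (\<Prod>i\<in>{2..k+1}. 1 - (a i)\<^sup>2)))
              powr (1 / real (k + 1)))
          (2 * \<rho> / Dfun \<rho> k a))"

definition kappa_c :: "real \<Rightarrow> real" where
  "kappa_c \<rho> = (INF k \<in> {1..}. kappa_ck \<rho> k)"

end

theory Submission
  imports Defs
begin

text \<open>Write \<open>x = 4\<rho>/(1+\<rho>)\<^sup>2\<close>, which lies in \<open>(0,1)\<close>. Since every factor \<open>1 - a\<^sub>i\<^sup>2\<close> lies in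
  \<open>(0,1]\<close>, the first term of the objective is at least \<open>x powr (1/(k+1))\<close>, so \<open>\<kappa>\<^sub>\<rho>(k)\<close> is
  too and \<open>\<kappa>\<^sub>\<rho> \<ge> x > 0\<close>. For \<open>k = 1\<close> the square of the objective is the maximum of a
  function increasing and a function decreasing in \<open>a\<^sub>2\<close>, so the infimum is attained where they
  cross: at \<open>a\<^sub>2 = 0\<close> if \<open>\<rho> \<le> 2\<close> and at \<open>a\<^sub>2 = (\<rho>\<^sup>2 - 4)/(\<rho>\<^sup>2 + 4)\<close> if \<open>\<rho> \<ge> 2\<close>.
  For \<open>k \<ge> 2\<close> the bound \<open>x powr (1/3)\<close> already dominates \<open>\<kappa>\<^sub>\<rho>(1)\<close> whenever
  \<open>\<kappa>\<^sub>\<rho>(1)\<^sup>6 \<le> x\<^sup>2\<close>, which holds for \<open>\<rho> \<le> 41/20\<close>.\<close>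

lemma sqrt_le_powr_third:
  fixes m x :: real
  assumes "0 \<le> m" "0 \<le> x" "m ^ 3 \<le> x\<^sup>2"
  shows "sqrt m \<le> x powr (1 / 3)"
proof -
  have "sqrt m = m powr (real 3 * (1 / 6))" using assms(1) by (simp flip: powr_half_sqrt)
  also have "\<dots> = (m powr real 3) powr (1 / 6)" by (rule powr_powr[symmetric])
  also have "\<dots> = (m ^ 3) powr (1 / 6)" using assms(1) by (simp add: powr_realpow')
  also have "\<dots> \<le> (x\<^sup>2) powr (1 / 6)" using assms by (intro powr_mono2) auto
  also have "\<dots> = (x powr real 2) powr (1 / 6)" using assms(2) by (simp add: powr_realpow')
  also have "\<dots> = x powr (1 / 3)" by (simp add: powr_powr)
  finally show ?thesis .
qed

lemma four_rho_div_sq_bounds: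
  fixes \<rho> :: real
  assumes "\<rho> > 1"
  shows "0 < 4 * \<rho> / (1 + \<rho>)\<^sup>2" "4 * \<rho> / (1 + \<rho>)\<^sup>2 < 1"
proof -
  have "(1 + \<rho>)\<^sup>2 = 4 * \<rho> + (\<rho> - 1)\<^sup>2" by (simp add: power2_eq_square algebra_simps)
  moreover have "(\<rho> - 1)\<^sup>2 > 0" using assms by simp
  ultimately have "4 * \<rho> < (1 + \<rho>)\<^sup>2" by linarith
  then show "0 < 4 * \<rho> / (1 + \<rho>)\<^sup>2" "4 * \<rho> / (1 + \<rho>)\<^sup>2 < 1" using assms by simp_all
qed

definition kappa_cost :: "real \<Rightarrow> nat \<Rightarrow> (nat \<Rightarrow> real) \<Rightarrow> real" where
  "kappa_cost \<rho> k a = max ((4 * \<rho> / ((1 + \<rho>)\<^sup>2 * sqrt (\<Prod>i\<in>{2..k+1}. 1 - (a i)\<^sup>2)))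
              powr (1 / real (k + 1)))
          (2 * \<rho> / Dfun \<rho> k a)"

lemma kappa_ck_eq_INF_cost: "kappa_ck \<rho> k = (INF a \<in> admissible k. kappa_cost \<rho> k a)"
  by (simp add: kappa_ck_def kappa_cost_def)

lemma const_admissible: "0 \<le> t \<Longrightarrow> t < 1 \<Longrightarrow> (\<lambda>_. t) \<in> admissible k"
  by (simp add: admissible_def)

lemma admissible_prod_bounds:
  assumes "a \<in> admissible k"
  shows "0 < (\<Prod>i\<in>{2..k+1}. 1 - (a i)\<^sup>2)" "(\<Prod>i\<in>{2..k+1}. 1 - (a i)\<^sup>2) \<le> 1"
proof -
  have factor: "0 < 1 - (a i)\<^sup>2 \<and> 1 - (a i)\<^sup>2 \<le> 1" if "i \<in> {2..k+1}" for i
  proof -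
    have "0 \<le> a i" "a i < 1" using assms that by (auto simp: admissible_def)
    then have "(a i)\<^sup>2 < 1" by (simp add: abs_square_less_1)
    then show ?thesis by simp
  qed
  show "0 < (\<Prod>i\<in>{2..k+1}. 1 - (a i)\<^sup>2)" by (rule prod_pos) (use factor in blast)
  show "(\<Prod>i\<in>{2..k+1}. 1 - (a i)\<^sup>2) \<le> 1"
    by (rule prod_le_1) (use factor in \<open>fastforce dest: less_imp_le\<close>)
qed

lemma kappa_cost_ge:
  assumes "\<rho> > 0" and "a \<in> admissible k"
  shows "(4 * \<rho> / (1 + \<rho>)\<^sup>2) powr (1 / real (k + 1)) \<le> kappa_cost \<rho> k a"
proof -
  let ?P = "\<Prod>i\<in>{2..k+1}. 1 - (a i)\<^sup>2"
  have "0 < sqrt ?P" "sqrt ?P \<le> 1"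
    using admissible_prod_bounds[OF assms(2)] by auto
  then have "4 * \<rho> / (1 + \<rho>)\<^sup>2 \<le> 4 * \<rho> / ((1 + \<rho>)\<^sup>2 * sqrt ?P)"
    using assms(1) by (simp add: divide_simps mult_left_le)
  then have "(4 * \<rho> / (1 + \<rho>)\<^sup>2) powr (1 / real (k + 1))
      \<le> (4 * \<rho> / ((1 + \<rho>)\<^sup>2 * sqrt ?P)) powr (1 / real (k + 1))"
    using assms(1) by (intro powr_mono2) auto
  then show ?thesis unfolding kappa_cost_def by linarith
qed

lemma bdd_below_kappa_cost: "\<rho> > 0 \<Longrightarrow> bdd_below (kappa_cost \<rho> k ` admissible k)"
  by (rule bdd_belowI[of _ 0]) (auto intro: order_trans[OF _ kappa_cost_ge])

lemma kappa_ck_ge: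
  "\<rho> > 0 \<Longrightarrow> (4 * \<rho> / (1 + \<rho>)\<^sup>2) powr (1 / real (k + 1)) \<le> kappa_ck \<rho> k"
  unfolding kappa_ck_eq_INF_cost
proof (rule cINF_greatest)
  show "admissible k \<noteq> {}" using const_admissible[of 0 k] by auto
qed (rule kappa_cost_ge)

definition kappa_cost_one :: "real \<Rightarrow> real \<Rightarrow> real" where
  "kappa_cost_one \<rho> t = max (4 * \<rho> / ((1 + \<rho>)\<^sup>2 * sqrt (1 - t\<^sup>2))) (2 * \<rho>\<^sup>2 / ((1 + \<rho>)\<^sup>2 * (1 + t)))"

lemma kappa_cost_one_eq:
  assumes "\<rho> > 0" and "a \<in> admissible 1"
  shows "kappa_cost \<rho> 1 a = sqrt (kappa_cost_one \<rho> (a 2))"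
proof -
  have t: "0 \<le> a 2" "a 2 < 1" using assms(2) by (auto simp: admissible_def)
  then have "0 < sqrt (1 - (a 2)\<^sup>2)" by (simp add: abs_square_less_1)
  moreover have "{2..1+1::nat} = {2}" by auto
  ultimately have first: "(4 * \<rho> / ((1 + \<rho>)\<^sup>2 * sqrt (\<Prod>i\<in>{2..1+1}. 1 - (a i)\<^sup>2))) powr (1 / real (1 + 1))
      = sqrt (4 * \<rho> / ((1 + \<rho>)\<^sup>2 * sqrt (1 - (a 2)\<^sup>2)))"
    using assms(1)
    by (simp only: prod.insert prod.empty finite.emptyI empty_iff mult_1_right)
      (simp add: powr_half_sqrt)
  have "Dfun \<rho> 1 a = sqrt (2 * (1 + \<rho>)\<^sup>2 * (1 + a 2))"
    by (simp add: Dfun_def rad_def algebra_simps power2_eq_square numeral_2_eq_2)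
  then have "2 * \<rho> / Dfun \<rho> 1 a = sqrt ((2 * \<rho>)\<^sup>2) / sqrt (2 * (1 + \<rho>)\<^sup>2 * (1 + a 2))"
    unfolding real_sqrt_abs using assms(1) by simp
  also have "\<dots> = sqrt ((2 * \<rho>)\<^sup>2 / (2 * (1 + \<rho>)\<^sup>2 * (1 + a 2)))"
    by (rule real_sqrt_divide[symmetric])
  also have "(2 * \<rho>)\<^sup>2 / (2 * (1 + \<rho>)\<^sup>2 * (1 + a 2)) = 2 * \<rho>\<^sup>2 / ((1 + \<rho>)\<^sup>2 * (1 + a 2))"
    by (simp add: power_mult_distrib)
  finally have second: "2 * \<rho> / Dfun \<rho> 1 a = sqrt (2 * \<rho>\<^sup>2 / ((1 + \<rho>)\<^sup>2 * (1 + a 2)))" .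
  show ?thesis
    unfolding kappa_cost_def kappa_cost_one_def first second by (simp add: max_def)
qed

lemma kappa_ck_one_eq_sqrt_min:
  assumes "\<rho> > 0" and "0 \<le> t\<^sub>0" "t\<^sub>0 < 1"
    and min: "\<And>t. 0 \<le> t \<Longrightarrow> t < 1 \<Longrightarrow> kappa_cost_one \<rho> t\<^sub>0 \<le> kappa_cost_one \<rho> t"
  shows "kappa_ck \<rho> 1 = sqrt (kappa_cost_one \<rho> t\<^sub>0)"
  unfolding kappa_ck_eq_INF_cost
proof (rule antisym)
  have adm: "(\<lambda>_. t\<^sub>0) \<in> admissible 1" using assms(2,3) by (rule const_admissible)
  have "kappa_cost \<rho> 1 (\<lambda>_. t\<^sub>0) = sqrt (kappa_cost_one \<rho> t\<^sub>0)"
    using kappa_cost_one_eq[OF assms(1) adm] by simp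
  then show "(INF a \<in> admissible 1. kappa_cost \<rho> 1 a) \<le> sqrt (kappa_cost_one \<rho> t\<^sub>0)"
    by (intro cINF_lower2[OF bdd_below_kappa_cost[OF assms(1)] adm]) simp
  show "sqrt (kappa_cost_one \<rho> t\<^sub>0) \<le> (INF a \<in> admissible 1. kappa_cost \<rho> 1 a)"
  proof (rule cINF_greatest)
    show "admissible 1 \<noteq> {}" using const_admissible[of 0 1] by auto
    fix a assume a: "a \<in> admissible 1"
    then have "0 \<le> a 2" "a 2 < 1" by (auto simp: admissible_def)
    then show "sqrt (kappa_cost_one \<rho> t\<^sub>0) \<le> kappa_cost \<rho> 1 a"
      using kappa_cost_one_eq[OF assms(1) a] by (simp add: min)
  qed
qed

lemma kappa_cost_one_ge:
  assumes "\<rho> > 0" and "0 \<le> t" "t < 1"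
  shows "4 * \<rho> / (1 + \<rho>)\<^sup>2 \<le> kappa_cost_one \<rho> t"
proof -
  have "0 < sqrt (1 - t\<^sup>2)" "sqrt (1 - t\<^sup>2) \<le> 1" using assms(2,3) by (auto simp: abs_square_less_1)
  then have "4 * \<rho> / (1 + \<rho>)\<^sup>2 \<le> 4 * \<rho> / ((1 + \<rho>)\<^sup>2 * sqrt (1 - t\<^sup>2))"
    using assms(1) by (simp add: divide_simps mult_left_le)
  then show ?thesis unfolding kappa_cost_one_def by linarith
qed

lemma kappa_cost_one_zero:
  assumes "\<rho> > 0" "\<rho> \<le> 2"
  shows "kappa_cost_one \<rho> 0 = 4 * \<rho> / (1 + \<rho>)\<^sup>2"
proof -
  have "2 * \<rho>\<^sup>2 \<le> 4 * \<rho>" using assms by (simp add: power2_eq_square)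
  then have "2 * \<rho>\<^sup>2 / (1 + \<rho>)\<^sup>2 \<le> 4 * \<rho> / (1 + \<rho>)\<^sup>2" by (simp add: divide_right_mono)
  then show ?thesis unfolding kappa_cost_one_def by simp
qed

lemma kappa_cost_one_crossing:
  assumes "\<rho> \<ge> 2"
  defines "t\<^sub>0 \<equiv> (\<rho>\<^sup>2 - 4) / (\<rho>\<^sup>2 + 4)"
  shows "0 \<le> t\<^sub>0" "t\<^sub>0 < 1"
    and "4 * \<rho> / ((1 + \<rho>)\<^sup>2 * sqrt (1 - t\<^sub>0\<^sup>2)) = (4 + \<rho>\<^sup>2) / (1 + \<rho>)\<^sup>2"
    and "2 * \<rho>\<^sup>2 / ((1 + \<rho>)\<^sup>2 * (1 + t\<^sub>0)) = (4 + \<rho>\<^sup>2) / (1 + \<rho>)\<^sup>2"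
proof -
  have "2\<^sup>2 \<le> \<rho>\<^sup>2" using assms(1) by (intro power_mono) auto
  then show "0 \<le> t\<^sub>0" unfolding t\<^sub>0_def by simp
  have pos: "\<rho>\<^sup>2 + 4 > 0" by (simp add: add_nonneg_pos)
  then show "t\<^sub>0 < 1" unfolding t\<^sub>0_def by (simp add: divide_simps)
  have "1 - t\<^sub>0\<^sup>2 = (4 * \<rho> / (\<rho>\<^sup>2 + 4))\<^sup>2"
    unfolding t\<^sub>0_def using pos by (simp add: divide_simps) (simp add: algebra_simps power2_eq_square)
  then have sqrt_t\<^sub>0: "sqrt (1 - t\<^sub>0\<^sup>2) = 4 * \<rho> / (\<rho>\<^sup>2 + 4)" using assms(1) by simp
  show "4 * \<rho> / ((1 + \<rho>)\<^sup>2 * sqrt (1 - t\<^sub>0\<^sup>2)) = (4 + \<rho>\<^sup>2) / (1 + \<rho>)\<^sup>2"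
    unfolding sqrt_t\<^sub>0 using assms(1) pos by (simp add: field_simps)
  show "2 * \<rho>\<^sup>2 / ((1 + \<rho>)\<^sup>2 * (1 + t\<^sub>0)) = (4 + \<rho>\<^sup>2) / (1 + \<rho>)\<^sup>2"
    unfolding t\<^sub>0_def using assms(1) pos by (simp add: divide_simps add.commute)
qed

lemma kappa_cost_one_ge_crossing:
  assumes "\<rho> \<ge> 2" and "0 \<le> t" "t < 1"
  shows "(4 + \<rho>\<^sup>2) / (1 + \<rho>)\<^sup>2 \<le> kappa_cost_one \<rho> t"
proof -
  define t\<^sub>0 where "t\<^sub>0 = (\<rho>\<^sup>2 - 4) / (\<rho>\<^sup>2 + 4)"
  note crossing = kappa_cost_one_crossing[OF assms(1), folded t\<^sub>0_def]
  have "0 < (1 + \<rho>)\<^sup>2" using assms(1) by simp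
  show ?thesis
  proof (cases "t \<le> t\<^sub>0")
    case True
    then have "2 * \<rho>\<^sup>2 / ((1 + \<rho>)\<^sup>2 * (1 + t\<^sub>0)) \<le> 2 * \<rho>\<^sup>2 / ((1 + \<rho>)\<^sup>2 * (1 + t))"
      using \<open>0 < (1 + \<rho>)\<^sup>2\<close> assms(2) by (intro divide_left_mono mult_left_mono) auto
    then show ?thesis unfolding kappa_cost_one_def crossing(4) by linarith
  next
    case False
    then have "t\<^sub>0\<^sup>2 \<le> t\<^sup>2" using crossing(1) by (intro power_mono) auto
    then have "sqrt (1 - t\<^sup>2) \<le> sqrt (1 - t\<^sub>0\<^sup>2)" by simp
    moreover have "0 < sqrt (1 - t\<^sup>2)" using assms(2,3) by (simp add: abs_square_less_1)
    ultimately have "4 * \<rho> / ((1 + \<rho>)\<^sup>2 * sqrt (1 - t\<^sub>0\<^sup>2)) \<le> 4 * \<rho> / ((1 + \<rho>)\<^sup>2 * sqrt (1 - t\<^sup>2))"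
      using \<open>0 < (1 + \<rho>)\<^sup>2\<close> assms(1) by (intro divide_left_mono mult_left_mono) auto
    then show ?thesis unfolding kappa_cost_one_def crossing(3) by linarith
  qed
qed

lemma kappa_ck_one_le_two:
  assumes "\<rho> > 0" "\<rho> \<le> 2"
  shows "kappa_ck \<rho> 1 = sqrt (4 * \<rho> / (1 + \<rho>)\<^sup>2)"
  using kappa_ck_one_eq_sqrt_min[of \<rho> 0] assms
  by (simp add: kappa_cost_one_zero kappa_cost_one_ge)

lemma kappa_ck_one_ge_two:
  assumes "\<rho> \<ge> 2"
  shows "kappa_ck \<rho> 1 = sqrt ((4 + \<rho>\<^sup>2) / (1 + \<rho>)\<^sup>2)"
proof -
  define t\<^sub>0 where "t\<^sub>0 = (\<rho>\<^sup>2 - 4) / (\<rho>\<^sup>2 + 4)"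
  note crossing = kappa_cost_one_crossing[OF assms, folded t\<^sub>0_def]
  have "kappa_cost_one \<rho> t\<^sub>0 = (4 + \<rho>\<^sup>2) / (1 + \<rho>)\<^sup>2"
    unfolding kappa_cost_one_def crossing(3,4) by simp
  with kappa_ck_one_eq_sqrt_min[of \<rho> t\<^sub>0] crossing(1,2) assms show ?thesis
    by (simp add: kappa_cost_one_ge_crossing)
qed

lemma kappa_ck_one_closed_form:
  assumes "\<rho> > 1"
  shows "\<rho> \<le> 2 \<Longrightarrow> kappa_ck \<rho> 1 = 2 * sqrt \<rho> / (1 + \<rho>)"
    and "2 \<le> \<rho> \<Longrightarrow> kappa_ck \<rho> 1 = sqrt (4 + \<rho>\<^sup>2) / (1 + \<rho>)"
  using assms kappa_ck_one_le_two[of \<rho>] kappa_ck_one_ge_two[of \<rho>]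
  by (simp_all add: real_sqrt_divide real_sqrt_mult)

lemma kappa_ck_one_bounds:
  assumes "\<rho> > 1"
  shows "0 < kappa_ck \<rho> 1" "kappa_ck \<rho> 1 < 1"
proof -
  have "\<exists>m. kappa_ck \<rho> 1 = sqrt m \<and> 0 < m \<and> m < 1"
  proof (cases "\<rho> \<le> 2")
    case True
    then show ?thesis
      using four_rho_div_sq_bounds[OF assms] kappa_ck_one_le_two[of \<rho>] assms by auto
  next
    case False
    then have "4 + \<rho>\<^sup>2 < (1 + \<rho>)\<^sup>2" by (simp add: power2_eq_square algebra_simps)
    moreover have "0 < 4 + \<rho>\<^sup>2" by (simp add: add_pos_nonneg)
    ultimately show ?thesis using False kappa_ck_one_ge_two[of \<rho>] by auto
  qed
  then show "0 < kappa_ck \<rho> 1" "kappa_ck \<rho> 1 < 1" by auto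
qed

text \<open>Any \<open>\<rho>\<^sub>0 > 2\<close> up to which this inequality persists would serve; \<open>41/20\<close> is a
  convenient rational one (the inequality reads \<open>512 \<le> 576\<close> at \<open>\<rho> = 2\<close>).\<close>
lemma crossing_value_cube_le:
  fixes \<rho> :: real
  assumes "2 \<le> \<rho>" "\<rho> \<le> 41 / 20"
  shows "(4 + \<rho>\<^sup>2) ^ 3 \<le> (4 * \<rho>)\<^sup>2 * (1 + \<rho>)\<^sup>2"
proof -
  have "(4 + \<rho>\<^sup>2) ^ 3 \<le> (4 + (41 / 20)\<^sup>2) ^ 3"
    using assms by (intro power_mono add_left_mono) auto
  also have "\<dots> \<le> (4 * 2)\<^sup>2 * (1 + 2)\<^sup>2" by (simp add: power3_eq_cube power2_eq_square)
  also have "\<dots> \<le> (4 * \<rho>)\<^sup>2 * (1 + \<rho>)\<^sup>2" using assms by (intro mult_mono power_mono) auto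
  finally show ?thesis .
qed

lemma kappa_ck_one_le_cube_root:
  assumes "1 < \<rho>" "\<rho> \<le> 41 / 20"
  shows "kappa_ck \<rho> 1 \<le> (4 * \<rho> / (1 + \<rho>)\<^sup>2) powr (1 / 3)"
proof (cases "\<rho> \<le> 2")
  case True
  define x where "x = 4 * \<rho> / (1 + \<rho>)\<^sup>2"
  have "0 < x" "x < 1" using four_rho_div_sq_bounds[OF assms(1)] by (simp_all add: x_def)
  then have "x ^ 3 \<le> x\<^sup>2" by (intro power_decreasing) auto
  then have "sqrt x \<le> x powr (1 / 3)" using \<open>0 < x\<close> by (intro sqrt_le_powr_third) auto
  moreover have "kappa_ck \<rho> 1 = sqrt x" using assms(1) True kappa_ck_one_le_two[of \<rho>] by (simp add: x_def)
  ultimately show ?thesis by (simp add: x_def)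
next
  case False
  then have "2 \<le> \<rho>" by simp
  define u where "u = (1 + \<rho>)\<^sup>2"
  have "0 < u" using assms(1) by (simp add: u_def)
  have "((4 + \<rho>\<^sup>2) / u) ^ 3 = (4 + \<rho>\<^sup>2) ^ 3 / u ^ 3" by (rule power_divide)
  also have "\<dots> \<le> (4 * \<rho>)\<^sup>2 * u / u ^ 3"
    using crossing_value_cube_le[OF \<open>2 \<le> \<rho>\<close> assms(2)] \<open>0 < u\<close>
    by (intro divide_right_mono) (simp_all add: u_def)
  also have "\<dots> = (4 * \<rho> / u)\<^sup>2"
    using \<open>0 < u\<close> by (simp add: power_divide power2_eq_square power3_eq_cube)
  finally have "((4 + \<rho>\<^sup>2) / (1 + \<rho>)\<^sup>2) ^ 3 \<le> (4 * \<rho> / (1 + \<rho>)\<^sup>2)\<^sup>2"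
    unfolding u_def .
  moreover have "0 < (4 + \<rho>\<^sup>2) / (1 + \<rho>)\<^sup>2" "0 < 4 * \<rho> / (1 + \<rho>)\<^sup>2"
    using \<open>0 < u\<close> assms(1) by (simp_all add: u_def add_pos_nonneg)
  ultimately show ?thesis
    unfolding kappa_ck_one_ge_two[OF \<open>2 \<le> \<rho>\<close>]
    by (intro sqrt_le_powr_third) auto
qed

lemma kappa_ck_one_le:
  assumes "1 < \<rho>" "\<rho> \<le> 41 / 20" and "k \<ge> 1"
  shows "kappa_ck \<rho> 1 \<le> kappa_ck \<rho> k"
proof (cases "k = 1")
  case False
  then have "1 / real (k + 1) \<le> 1 / 3" using assms(3) by (simp add: divide_simps)
  then have "(4 * \<rho> / (1 + \<rho>)\<^sup>2) powr (1 / 3) \<le> (4 * \<rho> / (1 + \<rho>)\<^sup>2) powr (1 / real (k + 1))"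
    using four_rho_div_sq_bounds[OF assms(1)] by (intro powr_mono') auto
  with kappa_ck_one_le_cube_root[OF assms(1,2)] kappa_ck_ge[of \<rho> k] assms(1) show ?thesis by simp
qed simp

lemma bdd_below_kappa_ck: "\<rho> > 0 \<Longrightarrow> bdd_below (kappa_ck \<rho> ` {1..})"
  by (rule bdd_belowI[of _ 0]) (auto intro: order_trans[OF _ kappa_ck_ge])

lemma kappa_c_le_kappa_ck_one: "\<rho> > 0 \<Longrightarrow> kappa_c \<rho> \<le> kappa_ck \<rho> 1"
  unfolding kappa_c_def by (rule cINF_lower[OF bdd_below_kappa_ck]) auto

lemma kappa_c_ge:
  assumes "\<rho> > 1"
  shows "4 * \<rho> / (1 + \<rho>)\<^sup>2 \<le> kappa_c \<rho>"
  unfolding kappa_c_def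
proof (rule cINF_greatest)
  fix k :: nat
  have "4 * \<rho> / (1 + \<rho>)\<^sup>2 = (4 * \<rho> / (1 + \<rho>)\<^sup>2) powr 1"
    by (rule powr_one[symmetric]) (use four_rho_div_sq_bounds[OF assms] in linarith)
  also have "\<dots> \<le> (4 * \<rho> / (1 + \<rho>)\<^sup>2) powr (1 / real (k + 1))"
    using four_rho_div_sq_bounds[OF assms] by (intro powr_mono') auto
  also have "\<dots> \<le> kappa_ck \<rho> k" using assms by (intro kappa_ck_ge) simp
  finally show "4 * \<rho> / (1 + \<rho>)\<^sup>2 \<le> kappa_ck \<rho> k" .
qed auto

lemma kappa_c_eq_kappa_ck_one:
  assumes "1 < \<rho>" "\<rho> \<le> 41 / 20"
  shows "kappa_c \<rho> = kappa_ck \<rho> 1"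
proof (rule antisym)
  show "kappa_c \<rho> \<le> kappa_ck \<rho> 1" using assms(1) by (intro kappa_c_le_kappa_ck_one) simp
  show "kappa_ck \<rho> 1 \<le> kappa_c \<rho>"
    unfolding kappa_c_def
  proof (rule cINF_greatest)
    fix k :: nat assume "k \<in> {1..}"
    then show "kappa_ck \<rho> 1 \<le> kappa_ck \<rho> k" by (intro kappa_ck_one_le[OF assms]) simp
  qed auto
qed

theorem lemma2p1:
  shows "(\<forall>\<rho>::real. \<rho> > 1 \<longrightarrow>
            0 < kappa_ck \<rho> 1 \<and> kappa_ck \<rho> 1 < 1
          \<and> (\<rho> \<le> 2 \<longrightarrow> kappa_ck \<rho> 1 = 2 * sqrt \<rho> / (1 + \<rho>))
          \<and> (2 \<le> \<rho> \<longrightarrow> kappa_ck \<rho> 1 = sqrt (4 + \<rho>\<^sup>2) / (1 + \<rho>))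
          \<and> 0 < kappa_c \<rho> \<and> kappa_c \<rho> < 1)
       \<and> (\<exists>\<rho>0::real. \<rho>0 > 2 \<and>
            (\<forall>\<rho>::real. 1 < \<rho> \<and> \<rho> \<le> \<rho>0 \<longrightarrow>
               kappa_c \<rho> = kappa_ck \<rho> 1
             \<and> (\<rho> \<le> 2 \<longrightarrow> kappa_c \<rho> = 2 * sqrt \<rho> / (1 + \<rho>))
             \<and> (2 \<le> \<rho> \<longrightarrow> kappa_c \<rho> = sqrt (4 + \<rho>\<^sup>2) / (1 + \<rho>))))"
proof (intro conjI allI impI exI[of _ "41 / 20"])
  fix \<rho> :: real
  assume "\<rho> > 1"
  show "0 < kappa_ck \<rho> 1" "kappa_ck \<rho> 1 < 1" using \<open>\<rho> > 1\<close> by (rule kappa_ck_one_bounds)+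
  show "\<rho> \<le> 2 \<Longrightarrow> kappa_ck \<rho> 1 = 2 * sqrt \<rho> / (1 + \<rho>)"
    and "2 \<le> \<rho> \<Longrightarrow> kappa_ck \<rho> 1 = sqrt (4 + \<rho>\<^sup>2) / (1 + \<rho>)"
    using kappa_ck_one_closed_form[OF \<open>\<rho> > 1\<close>] by auto
  show "0 < kappa_c \<rho>"
    using four_rho_div_sq_bounds(1)[OF \<open>\<rho> > 1\<close>] kappa_c_ge[OF \<open>\<rho> > 1\<close>] by linarith
  show "kappa_c \<rho> < 1"
    using kappa_c_le_kappa_ck_one[of \<rho>] kappa_ck_one_bounds(2)[OF \<open>\<rho> > 1\<close>] \<open>\<rho> > 1\<close> by linarith
next
  fix \<rho> :: real
  assume "1 < \<rho> \<and> \<rho> \<le> 41 / 20"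
  then have "1 < \<rho>" "\<rho> \<le> 41 / 20" by auto
  then have eq: "kappa_c \<rho> = kappa_ck \<rho> 1" by (rule kappa_c_eq_kappa_ck_one)
  show "kappa_c \<rho> = kappa_ck \<rho> 1"
    and "\<rho> \<le> 2 \<Longrightarrow> kappa_c \<rho> = 2 * sqrt \<rho> / (1 + \<rho>)"
    and "2 \<le> \<rho> \<Longrightarrow> kappa_c \<rho> = sqrt (4 + \<rho>\<^sup>2) / (1 + \<rho>)"
    unfolding eq using kappa_ck_one_closed_form[OF \<open>1 < \<rho>\<close>] by auto
qed simp

end
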